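(* For all $n,k\ge0$, $$[x^ny^k]\,\frac{1}{x}\,\mathrm{Rev}\left(\frac{x(1-yx)}{1+rx+sx^2}\right)=\sum_{j=k}^n\binom{j}{k}\binom{n+k}{2j}s^{\,j-k}r^{\,n+k-2j}C_j,$$ where $C_j=\frac{1}{j+1}\binom{2j}{j}$ (only terms with $2j\le n+k$ contribute).
   Context: $\mathrm{Rev}$ denotes compositional inverse with respect to $x$. *)

theory Defs
  imports "HOL-Computational_Algebra.Formal_Power_Series"
begin

definition Rev :: "'a::comm_ring_1 fps \<Rightarrow> 'a fps" where
  "Rev f = (THE g. fps_nth g 0 = 0 \<and> f oo g = fps_X)"

definition catalan :: "nat \<Rightarrow> 'a::field_char_0" where
  "catalan j = of_nat ((2*j) choose j) / of_nat (j + 1)"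

end

(* Let A = (1/x) Rev(x(1 - yx)/(1 + rx + sx^2)). Then g = xA is characterised by
   g(1 - yg) = x(1 + rg + sg^2), i.e. (1 - rx)A = 1 + x(y + sx)A^2. Writing A = B/(1 - rx)
   turns this into the Catalan equation B = 1 + W B^2 with W = x(y + sx)/(1 - rx)^2, so
   A = C(W)/(1 - rx) for the Catalan series C. Hence A = sum_j C_j x^j (y + sx)^j (1 - rx)^-(2j+1),
   and the coefficient of x^n y^k follows from the binomial theorem and the negative binomial series. *)

theory Submission
  imports Defs
begin

unbundle fps_syntax

lemma central_binomial_Suc:
  "(2 * Suc n choose Suc n) * Suc n = 2 * (2 * n + 1) * (2 * n choose n)"
  by (smt (verit, ccfv_SIG) Suc_eq_plus1 Suc_times_binomial_add Suc_times_binomial_eq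
      mult.assoc add_Suc_right add_Suc_shift mult.commute mult_2)

lemma catalan_Suc:
  "(of_nat n + 2) * catalan (Suc n) = 2 * (2 * of_nat n + 1) * (catalan n :: 'a::field_char_0)"
proof -
  have "(of_nat n + 2 :: 'a) \<noteq> 0" "(of_nat n + 1 :: 'a) \<noteq> 0"
    using of_nat_neq_0[of "Suc n", where 'a='a] of_nat_neq_0[of n, where 'a='a]
    by (simp_all add: add.commute)
  moreover have "of_nat (2 * Suc n choose Suc n) * (of_nat n + 1)
      = 2 * (2 * of_nat n + 1) * (of_nat (2 * n choose n) :: 'a)"
    using arg_cong[OF central_binomial_Suc, of "of_nat :: nat \<Rightarrow> 'a"]
    by (simp del: binomial_Suc_Suc add: algebra_simps)
  ultimately show ?thesis
    unfolding catalan_def by (simp del: binomial_Suc_Suc add: eq_divide_eq ac_simps)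
qed

lemma catalan_gbinomial:
  "catalan n = - (1/2) * (-4) ^ Suc n * ((1/2 :: 'a::field_char_0) gchoose Suc n)"
proof (induction n)
  case 0
  show ?case by (simp add: catalan_def)
next
  case (Suc n)
  let ?G = "\<lambda>k. (1/2 :: 'a) gchoose k"
  have G_Suc: "(of_nat n + 2) * ?G (Suc (Suc n)) = (1/2 - of_nat (Suc n)) * ?G (Suc n)"
    using gbinomial_mult_1[of "1/2 :: 'a" "Suc n"]
    by (simp only: eq_diff_eq' left_diff_distrib of_nat_Suc) (simp add: algebra_simps)
  have "(of_nat n + 2) * (- (1/2) * (-4) ^ Suc (Suc n) * ?G (Suc (Suc n)))
      = - (1/2) * (-4) ^ Suc n * (-4) * ((of_nat n + 2) * ?G (Suc (Suc n)))"
    by (simp only: power_Suc2 ac_simps)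
  also have "\<dots> = 2 * (2 * of_nat n + 1) * catalan n"
    unfolding G_Suc Suc.IH by (simp add: algebra_simps)
  also have "\<dots> = (of_nat n + 2) * catalan (Suc n)"
    by (rule catalan_Suc[symmetric])
  finally have "(of_nat n + 2) * catalan (Suc n)
      = (of_nat n + 2) * (- (1/2) * (-4) ^ Suc (Suc n) * ?G (Suc (Suc n)))" ..
  moreover have "(of_nat n + 2 :: 'a) \<noteq> 0"
    using of_nat_neq_0[of "Suc n", where 'a='a] by (simp add: add.commute)
  ultimately show ?case
    by (metis mult_left_cancel)
qed

lemma catalan_fps_equation:
  "Abs_fps catalan = 1 + fps_X * Abs_fps catalan ^ 2"
proof -
  define C where "C = Abs_fps (catalan :: nat \<Rightarrow> 'a)"
  define D where "D = fps_binomial (1/2 :: 'a) oo (fps_const (-4) * fps_X)"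
  have "fps_binomial (1/2 :: 'a) ^ 2 = 1 + fps_X"
    by (simp add: fps_binomial_power fps_binomial_1)
  then have D_square: "D ^ 2 = 1 - 4 * fps_X"
    unfolding D_def fps_compose_power[of "fps_const (-4) * fps_X", simplified]
    by (simp add: fps_compose_add_distrib flip: neg_numeral_fps_const)
  have D_catalan: "D = 1 - 2 * fps_X * C"
  proof (rule fps_ext)
    fix n show "D $ n = (1 - 2 * fps_X * C) $ n"
      by (cases n) (simp_all add: D_def C_def fps_compose_linear catalan_gbinomial
          numeral_fps_const mult.assoc)
  qed
  have "4 * fps_X * (1 + fps_X * C ^ 2 - C) = D ^ 2 - (1 - 4 * fps_X)"
    unfolding D_catalan by (simp add: algebra_simps power2_eq_square)
  then show ?thesis
    unfolding C_def[symmetric] D_square by simp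
qed

lemma catalan_Suc_convolution:
  "catalan (Suc n) = (\<Sum>i=0..n. catalan i * catalan (n - i))"
proof -
  have "catalan (Suc n) = (1 + fps_X * Abs_fps catalan ^ 2) $ Suc n"
    by (subst catalan_fps_equation[symmetric]) simp
  also have "\<dots> = (Abs_fps catalan * Abs_fps catalan) $ n"
    by (simp only: fps_add_nth fps_X_mult_nth power2_eq_square) simp
  finally show ?thesis
    by (simp add: fps_mult_nth)
qed

lemma Rev_eqI:
  fixes f g :: "'a::idom fps"
  assumes f0: "f $ 0 = 0" and g0: "g $ 0 = 0" and fg: "f oo g = fps_X"
  shows "Rev f = g"
proof -
  have "f $ 1 * g $ 1 = 1"
    using arg_cong[OF fg, of "\<lambda>h. h $ 1"] f0 by (simp add: fps_compose_nth)
  then have g1: "g $ 1 \<noteq> 0"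
    by auto
  have "(g oo f) oo g = fps_X oo g"
    using fps_compose_assoc[OF g0 f0, of g] fg g0 by simp
  then have gf: "g oo f = fps_X"
    using fps_compose_inj_right[OF g0 g1] by blast
  show ?thesis
    unfolding Rev_def
  proof (rule the_equality)
    fix h assume h: "h $ 0 = 0 \<and> f oo h = fps_X"
    then have "h = (g oo f) oo h"
      by (simp add: gf)
    also have "\<dots> = g"
      using fps_compose_assoc[of h f g] h f0 by simp
    finally show "h = g" .
  qed (use g0 fg in simp)
qed

definition geometric_fps :: "'a::comm_ring_1 \<Rightarrow> 'a fps" where
  "geometric_fps c = Abs_fps (\<lambda>m. c ^ m)"

lemma geometric_fps_times_one_minus:
  "geometric_fps c * (1 - fps_const c * fps_X) = 1"
proof (rule fps_ext)
  fix n
  have "geometric_fps c * (1 - fps_const c * fps_X)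
      = geometric_fps c - fps_const c * (fps_X * geometric_fps c)"
    by (simp add: algebra_simps)
  then show "(geometric_fps c * (1 - fps_const c * fps_X)) $ n = 1 $ n"
    by (cases n) (simp_all add: geometric_fps_def)
qed

lemma geometric_fps_power_nth:
  "(geometric_fps c ^ Suc a) $ m = of_nat ((m + a) choose a) * c ^ m"
proof (induction a arbitrary: m)
  case 0
  show ?case by (simp add: geometric_fps_def)
next
  case (Suc a)
  have "(geometric_fps c ^ Suc (Suc a)) $ m = (geometric_fps c * geometric_fps c ^ Suc a) $ m"
    by (simp only: power_Suc)
  also have "\<dots> = (\<Sum>i=0..m. c ^ i * (of_nat ((m - i + a) choose a) * c ^ (m - i)))"
    unfolding fps_mult_nth Suc.IH by (simp add: geometric_fps_def)
  also have "\<dots> = of_nat (\<Sum>i=0..m. (a + (m - i)) choose a) * c ^ m"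
    unfolding of_nat_sum sum_distrib_right
  proof (intro sum.cong)
    fix i assume "i \<in> {0..m}"
    then have "c ^ i * c ^ (m - i) = c ^ m"
      by (simp flip: power_add)
    then show "c ^ i * (of_nat ((m - i + a) choose a) * c ^ (m - i)) = of_nat ((a + (m - i)) choose a) * c ^ m"
      by (metis add.commute mult.assoc mult.commute)
  qed simp
  also have "(\<Sum>i=0..m. (a + (m - i)) choose a) = (\<Sum>j\<le>m. (a + j) choose a)"
    using sum.atLeastAtMost_rev[of "\<lambda>j. (a + j) choose a" 0 m] by (simp add: atLeast0AtMost)
  also have "\<dots> = (m + Suc a) choose Suc a"
    using choose_rising_sum(1)[of a m] by (simp only: Suc_eq_plus1 ac_simps)
  finally show ?case .
qed

definition catalan_series :: "'a::field_char_0 fps fps" where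
  "catalan_series = Abs_fps (\<lambda>j. fps_const (catalan j))"

lemma catalan_series_equation:
  "catalan_series = 1 + fps_X * (catalan_series :: 'a::field_char_0 fps fps) ^ 2"
proof (rule fps_ext)
  fix n
  show "catalan_series $ n = (1 + fps_X * (catalan_series :: 'a fps fps) ^ 2) $ n"
  proof (cases n)
    case 0
    then show ?thesis by (simp add: catalan_series_def catalan_def)
  next
    case (Suc m)
    have "fps_const (catalan (Suc m) :: 'a) = (\<Sum>i=0..m. fps_const (catalan i) * fps_const (catalan (m - i)))"
      unfolding catalan_Suc_convolution fps_const_mult
      by (rule sum_comp_morphism[symmetric, unfolded comp_def]) (simp_all flip: fps_const_add)
    then show ?thesis
      unfolding Suc fps_add_nth fps_X_mult_nth
      by (simp add: catalan_series_def power2_eq_square fps_mult_nth)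
  qed
qed

(* With x = fps_X and y = fps_const fps_X this is x(y + sx)/(1 - rx)^2. *)
definition catalan_argument :: "'a::field_char_0 \<Rightarrow> 'a \<Rightarrow> 'a fps fps" where
  "catalan_argument r s =
     fps_X * (fps_const fps_X + fps_const (fps_const s) * fps_X) * geometric_fps (fps_const r) ^ 2"

definition rev_series :: "'a::field_char_0 \<Rightarrow> 'a \<Rightarrow> 'a fps fps" where
  "rev_series r s = geometric_fps (fps_const r) * (catalan_series oo catalan_argument r s)"

lemma rev_series_equation:
  "rev_series r s * (1 - fps_const fps_X * fps_X * rev_series r s)
     = 1 + fps_const (fps_const r) * fps_X * rev_series r s
         + fps_const (fps_const s) * fps_X ^ 2 * rev_series r s ^ 2"
proof -
  define E where "E = geometric_fps (fps_const r)"
  define W where "W = catalan_argument r s"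
  define N where "N = catalan_series oo W"
  have W0: "W $ 0 = 0"
    by (simp add: W_def catalan_argument_def mult.assoc)
  have "N = (1 + fps_X * catalan_series ^ 2) oo W"
    unfolding N_def by (subst catalan_series_equation) (rule refl)
  also have "\<dots> = 1 + W * N ^ 2"
    unfolding N_def
    by (simp add: fps_compose_add_distrib fps_compose_mult_distrib[OF W0] fps_compose_power[OF W0] W0)
  finally have N_equation: "N = 1 + W * N ^ 2" .
  have "(1 - fps_const (fps_const r) * fps_X) * rev_series r s
      = (E * (1 - fps_const (fps_const r) * fps_X)) * N"
    unfolding rev_series_def E_def N_def W_def by (simp only: ac_simps)
  also have "\<dots> = N"
    unfolding E_def geometric_fps_times_one_minus by simp
  also have "\<dots> = 1 + fps_X * (fps_const fps_X + fps_const (fps_const s) * fps_X) * (E * N) ^ 2"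
    by (subst N_equation) (simp add: W_def catalan_argument_def E_def power_mult_distrib ac_simps)
  finally have "(1 - fps_const (fps_const r) * fps_X) * rev_series r s
      = 1 + fps_X * (fps_const fps_X + fps_const (fps_const s) * fps_X) * rev_series r s ^ 2"
    unfolding E_def N_def W_def rev_series_def .
  then show ?thesis
    by (simp add: algebra_simps power2_eq_square)
qed

lemma Rev_eq_X_times_rev_series:
  "Rev (fps_X * (1 - fps_const fps_X * fps_X)
          * inverse (1 + fps_const (fps_const r) * fps_X + fps_const (fps_const s) * fps_X ^ 2))
     = fps_X * rev_series r s"
proof (rule Rev_eqI)
  define P :: "'a fps fps" where "P = 1 + fps_const (fps_const r) * fps_X + fps_const (fps_const s) * fps_X ^ 2"
  define g where "g = fps_X * rev_series r s"
  have g0: "g $ 0 = 0"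
    by (simp add: g_def)
  have "P $ 0 * inverse (P $ 0) = 1"
    by (simp add: P_def)
  then have "P * inverse P = 1"
    unfolding fps_inverse_def by (rule fps_right_inverse)
  then have P_inverse: "(P oo g) * (inverse P oo g) = 1"
    by (simp add: fps_compose_mult_distrib[OF g0, symmetric])
  have "P oo g = 1 + fps_const (fps_const r) * g + fps_const (fps_const s) * g ^ 2"
    unfolding P_def
    by (simp add: fps_compose_add_distrib fps_compose_mult_distrib[OF g0] fps_compose_power[OF g0, symmetric] g0)
  then have "g * (1 - fps_const fps_X * g) = fps_X * (P oo g)"
    using rev_series_equation[of r s] by (simp add: g_def power2_eq_square ac_simps)
  then have "(fps_X * (1 - fps_const fps_X * fps_X)) oo g = fps_X * (P oo g)"
    by (simp add: fps_compose_mult_distrib[OF g0] fps_compose_sub_distrib g0)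
  then show "(fps_X * (1 - fps_const fps_X * fps_X) * inverse P) oo g = fps_X"
    by (simp add: fps_compose_mult_distrib[OF g0] P_inverse flip: mult.assoc)
  show "g $ 0 = 0" by (fact g0)
qed (simp add: mult.assoc)

lemma fps_mult_compose_nth:
  fixes E C W :: "'a::comm_ring_1 fps"
  assumes W0: "W $ 0 = 0"
  shows "(E * (C oo W)) $ n = (\<Sum>j=0..n. C $ j * (E * W ^ j) $ n)"
proof -
  have "(E * (C oo W)) $ n = (\<Sum>i=0..n. \<Sum>j=0..n - i. E $ i * (C $ j * (W ^ j) $ (n - i)))"
    by (simp add: fps_mult_nth fps_compose_nth sum_distrib_left)
  also have "\<dots> = (\<Sum>i=0..n. \<Sum>j=0..n. E $ i * (C $ j * (W ^ j) $ (n - i)))"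
    using startsby_zero_power_prefix[OF W0] by (intro sum.cong sum.mono_neutral_left) auto
  also have "\<dots> = (\<Sum>j=0..n. C $ j * (E * W ^ j) $ n)"
    by (subst sum.swap) (simp add: fps_mult_nth sum_distrib_left ac_simps)
  finally show ?thesis .
qed

lemma geometric_monomial_nth:
  "((fps_X ^ p * fps_const (fps_const c * fps_X ^ i) * geometric_fps (fps_const r) ^ Suc q) $ n) $ k
     = (if k = i \<and> p \<le> n then c * of_nat ((n - p + q) choose q) * r ^ (n - p) else 0)"
proof -
  define G where "G = geometric_fps (fps_const r) ^ Suc q"
  have G_nth: "G $ m = fps_const (of_nat ((m + q) choose q) * r ^ m)" for m
    unfolding G_def geometric_fps_power_nth by (simp add: fps_const_power flip: fps_of_nat)
  have X_power_nth: "(fps_X ^ p * fps_const a * G) $ n = (if p \<le> n then a * G $ (n - p) else 0)" for a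
    by (simp add: fps_X_power_mult_nth mult.assoc)
  show ?thesis
    unfolding G_def[symmetric] X_power_nth G_nth by (simp add: fps_X_power_mult_right_nth ac_simps)
qed

lemma catalan_term_nth:
  "((fps_X ^ j * (fps_const fps_X + fps_const (fps_const s) * fps_X) ^ j
       * geometric_fps (fps_const r) ^ Suc (2 * j)) $ n) $ k
     = of_nat (j choose k) * of_nat ((n + k) choose (2 * j)) * s ^ (j - k) * r ^ (n + k - 2 * j)"
proof -
  define G where "G = geometric_fps (fps_const r) ^ Suc (2 * j)"
  have expand: "fps_X ^ j * (fps_const fps_X + fps_const (fps_const s) * fps_X) ^ j * G
      = (\<Sum>i\<le>j. fps_X ^ (2 * j - i) * fps_const (fps_const (of_nat (j choose i) * s ^ (j - i)) * fps_X ^ i) * G)"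
    unfolding binomial_ring sum_distrib_left sum_distrib_right
  proof (rule sum.cong)
    fix i assume "i \<in> {..j}"
    then have "fps_X ^ (2 * j - i) = (fps_X ^ j * fps_X ^ (j - i) :: 'a fps fps)"
      by (simp flip: power_add)
    then show "fps_X ^ j * (of_nat (j choose i) * fps_const fps_X ^ i * (fps_const (fps_const s) * fps_X) ^ (j - i)) * G
        = fps_X ^ (2 * j - i) * fps_const (fps_const (of_nat (j choose i) * s ^ (j - i)) * fps_X ^ i) * G"
      by (simp add: power_mult_distrib fps_const_power fps_of_nat ac_simps flip: fps_const_mult)
  qed simp
  have "((fps_X ^ j * (fps_const fps_X + fps_const (fps_const s) * fps_X) ^ j * G) $ n) $ k
      = (\<Sum>i\<le>j. if k = i \<and> 2 * j - i \<le> n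
           then of_nat (j choose i) * s ^ (j - i) * of_nat ((n - (2 * j - i) + 2 * j) choose (2 * j))
                * r ^ (n - (2 * j - i))
           else 0)"
    unfolding expand fps_sum_nth unfolding G_def geometric_monomial_nth ..
  also have "\<dots> = (if k \<le> j \<and> 2 * j - k \<le> n
      then of_nat (j choose k) * s ^ (j - k) * of_nat ((n - (2 * j - k) + 2 * j) choose (2 * j))
           * r ^ (n - (2 * j - k))
      else 0)"
    by (simp add: sum.delta' flip: if_if_eq_conj)
  also have "\<dots> = of_nat (j choose k) * of_nat ((n + k) choose (2 * j)) * s ^ (j - k) * r ^ (n + k - 2 * j)"
    by (auto simp: binomial_eq_0 not_le)
  finally show ?thesis
    unfolding G_def .
qed

lemma rev_series_nth:
  "(rev_series r s $ n) $ k = (\<Sum>j=0..n. of_nat (j choose k) * of_nat ((n + k) choose (2 * j))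
      * s ^ (j - k) * r ^ (n + k - 2 * j) * catalan j)"
proof -
  define E where "E = geometric_fps (fps_const r)"
  have W0: "catalan_argument r s $ 0 = 0"
    by (simp add: catalan_argument_def mult.assoc)
  have E_times_power: "E * catalan_argument r s ^ j
      = fps_X ^ j * (fps_const fps_X + fps_const (fps_const s) * fps_X) ^ j * E ^ Suc (2 * j)" for j
    by (simp add: E_def catalan_argument_def power_mult_distrib ac_simps flip: power_mult power_Suc)
  then have "(rev_series r s $ n) $ k = (\<Sum>j=0..n. catalan j
      * ((fps_X ^ j * (fps_const fps_X + fps_const (fps_const s) * fps_X) ^ j * E ^ Suc (2 * j)) $ n) $ k)"
    unfolding rev_series_def fps_mult_compose_nth[OF W0] E_def[symmetric] E_times_power fps_sum_nth
    by (simp add: catalan_series_def)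
  then show ?thesis
    unfolding E_def catalan_term_nth by (simp add: ac_simps)
qed

theorem mainTheorem16:
  fixes r s :: "'a::field_char_0" and n k :: nat
  defines "X \<equiv> (fps_X :: 'a fps fps)"
      and "Y \<equiv> fps_const (fps_X :: 'a fps)"
      and "R \<equiv> fps_const (fps_const r :: 'a fps)"
      and "S \<equiv> fps_const (fps_const s :: 'a fps)"
  shows "fps_nth (fps_nth (fps_shift 1 (Rev (X * (1 - Y * X) * inverse (1 + R * X + S * X ^ 2)))) n) k
     = (\<Sum>j = k..n. of_nat (j choose k) * of_nat ((n + k) choose (2 * j))
          * s ^ (j - k) * r ^ (n + k - 2 * j) * catalan j)"
proof -
  have shift_Rev: "fps_shift 1 (Rev (X * (1 - Y * X) * inverse (1 + R * X + S * X ^ 2))) = rev_series r s"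
    unfolding X_def Y_def R_def S_def Rev_eq_X_times_rev_series
    unfolding mult.commute[of fps_X "rev_series r s"] by (rule fps_shift_times_fps_X')
  show ?thesis
    unfolding shift_Rev rev_series_nth
    by (intro sum.mono_neutral_right) (auto simp: binomial_eq_0)
qed

end
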